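(* Let $\mu$ be a probability measure on $\partial\mathbb{D}$ with infinite support whose Christoffel–Darboux kernel $K_n$ satisfies $$\frac{K_n\big(e^{i(\theta+\frac{2\pi a}{n})},e^{i(\theta+\frac{2\pi b}{n})}\big)}{K_n(e^{i\theta},e^{i\theta})}\longrightarrow e^{i\pi(a-\bar b)}\frac{\sin(\pi(a-\bar b))}{\pi(a-\bar b)}\quad(n\to\infty)$$ uniformly for $\theta\in[0,2\pi)$ and $a,b$ in compact subsets of the strip $\{w\in\mathbb{C}:|\mathrm{Im}\,w|<\tfrac12\}$. Let $\{\beta_n\}_{n\ge0}$ be any sequence with $|\beta_n|=1$ and consider the paraorthogonal polynomials $H_n^{(\beta_{n-1})}$. Then for every $e^{i\Theta}\in\partial\mathbb{D}$ and every $j\in\mathbb{Z}$, $$n\big(\theta^{(n)}_{j+1}(\Theta)-\theta^{(n)}_j(\Theta)\big)\longrightarrow2\pi\quad(n\to\infty).$$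
   Context: $\{\varphi_n\}$ are the orthonormal polynomials of $\mu$ ($\varphi_n$ of degree $n$, positive leading coefficient), $\varphi_n^*(z)=z^n\overline{\varphi_n(1/\bar z)}$, $K_n(z,w)=\sum_{k=0}^{n-1}\varphi_k(z)\overline{\varphi_k(w)}$ (the sine expression is interpreted as $1$ when $a-\bar b=0$). For $|\beta|=1$, $H_n^{(\beta)}(z)=z\varphi_{n-1}(z)-\bar\beta\varphi_{n-1}^*(z)$; its zeros are simple and on $\partial\mathbb{D}$. Given $\Theta\in\mathbb{R}$, the zeros of $H_n^{(\beta_{n-1})}$ are written $e^{i\theta^{(n)}_j(\Theta)}$ with real angles labeled so that $\dots<\theta^{(n)}_{-1}(\Theta)<\Theta\le\theta^{(n)}_0(\Theta)<\theta^{(n)}_1(\Theta)<\dots$ (all $2\pi$-translates included, $j\in\mathbb{Z}$). *)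

theory Defs
  imports "HOL-Probability.Probability" "HOL-Computational_Algebra.Polynomial"
begin

definition measure_support :: "complex measure \<Rightarrow> complex set" where
  "measure_support \<mu> = {z. \<forall>e>0. emeasure \<mu> (ball z e) > 0}"

definition prob_measure_on_circle :: "complex measure \<Rightarrow> bool" where
  "prob_measure_on_circle \<mu> \<longleftrightarrow> prob_space \<mu> \<and> sets \<mu> = sets borel \<and>
     emeasure \<mu> (- sphere 0 1) = 0"

definition is_OPUC :: "complex measure \<Rightarrow> (nat \<Rightarrow> complex poly) \<Rightarrow> bool" where
  "is_OPUC \<mu> \<phi> \<longleftrightarrow>
     (\<forall>n. degree (\<phi> n) = n \<and> Im (lead_coeff (\<phi> n)) = 0 \<and> Re (lead_coeff (\<phi> n)) > 0) \<and>
     (\<forall>m n. (\<integral>z. poly (\<phi> m) z * cnj (poly (\<phi> n) z) \<partial>\<mu>) = (if m = n then 1 else 0))"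

text \<open>Reversed polynomial p^*(z) = z^n conj(p(1/conj z)) for a polynomial of degree n.\<close>
definition poly_star :: "nat \<Rightarrow> complex poly \<Rightarrow> complex poly" where
  "poly_star n p = (\<Sum>k\<le>n. monom (cnj (coeff p (n - k))) k)"

definition CD_kernel :: "(nat \<Rightarrow> complex poly) \<Rightarrow> nat \<Rightarrow> complex \<Rightarrow> complex \<Rightarrow> complex" where
  "CD_kernel \<phi> n z w = (\<Sum>k<n. poly (\<phi> k) z * cnj (poly (\<phi> k) w))"

definition sine_kernel :: "complex \<Rightarrow> complex" where
  "sine_kernel w = (if w = 0 then 1
      else exp (\<i> * of_real pi * w) * sin (of_real pi * w) / (of_real pi * w))"

definition paraorth :: "(nat \<Rightarrow> complex poly) \<Rightarrow> nat \<Rightarrow> complex \<Rightarrow> complex poly" where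
  "paraorth \<phi> n \<beta> = [:0, 1:] * \<phi> (n - 1) - smult (cnj \<beta>) (poly_star (n - 1) (\<phi> (n - 1)))"

definition zero_angles :: "(nat \<Rightarrow> complex poly) \<Rightarrow> (nat \<Rightarrow> complex) \<Rightarrow> nat \<Rightarrow> real set" where
  "zero_angles \<phi> \<beta> n = {t. poly (paraorth \<phi> n (\<beta> (n - 1))) (exp (\<i> * of_real t)) = 0}"

text \<open>theta_j^{(n)}(Theta): labeled so that ... < theta_{-1} < Theta <= theta_0 < theta_1 < ...\<close>
definition zero_angle :: "(nat \<Rightarrow> complex poly) \<Rightarrow> (nat \<Rightarrow> complex) \<Rightarrow> nat \<Rightarrow> real \<Rightarrow> int \<Rightarrow> real" where
  "zero_angle \<phi> \<beta> n \<Theta> j =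
     (THE t. t \<in> zero_angles \<phi> \<beta> n \<and>
        (if j \<ge> 0 then \<Theta> \<le> t \<and> int (card (zero_angles \<phi> \<beta> n \<inter> {\<Theta>..<t})) = j
         else t < \<Theta> \<and> int (card (zero_angles \<phi> \<beta> n \<inter> {t..<\<Theta>})) = - j))"

end

theory Submission
  imports Defs "HOL-Computational_Algebra.Fundamental_Theorem_Algebra"
begin

(* The paraorthogonal polynomial H of degree n is orthogonal to z P for deg P < n - 1.  Hence, if
   H(z\<^sub>0) = 0 with |z\<^sub>0| = 1, the quotient H(z) / (z - z\<^sub>0) is orthogonal to every polynomial of
   degree < n vanishing at z\<^sub>0, and the reproducing property of the Christoffel--Darboux kernel
   gives H(z) = c (z - z\<^sub>0) K\<^sub>n(z, z\<^sub>0).  So two zeros e^(it), e^(is) of H force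
   K\<^sub>n(e^(is), e^(it)) = 0, which the sine kernel asymptotics rule out for
   0 < s - t \<le> 2\<pi>(1 - \<epsilon>)/n because sinc(\<pi>a) \<ge> \<epsilon>/3 for 0 < a \<le> 1 - \<epsilon>.
   Conversely, the reflection symmetry z^n conj(H(1/conj z)) = -b H(z) makes a unimodular rotation
   of H(e^(ix)) real, and by the same asymptotics its values at x = t + \<pi>/n and
   x = t + 2\<pi>(1 + \<epsilon>/2)/n have the signs of sinc(\<pi>/2) > 0 and sinc(\<pi>(1 + \<epsilon>/2)) < 0.  So for
   all large n consecutive zeros are more than 2\<pi>(1 - \<epsilon>)/n and less than 2\<pi>(1 + \<epsilon>)/n apart,
   and counting zeros from \<Theta> turns this into 2\<pi>(1 - \<epsilon>) < n (\<theta>\<^sub>j\<^sub>+\<^sub>1 - \<theta>\<^sub>j) < 2\<pi>(1 + \<epsilon>). *)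

section \<open>Reversed polynomials on the unit circle\<close>

lemma cnj_mult_self_unit: "norm z = 1 \<Longrightarrow> cnj z * z = 1"
  using complex_norm_square[of z] by (simp add: mult.commute)

lemma cnj_unit: "norm z = 1 \<Longrightarrow> cnj z = 1 / z"
  using divide_conv_cnj[of z 1] by simp

lemma one_div_cnj_unit: "norm z = 1 \<Longrightarrow> 1 / cnj z = z"
  using divide_conv_cnj[of "cnj z" 1] by simp

lemma one_div_cnj_eq_self_iff:
  assumes "z \<noteq> 0"
  shows "1 / cnj z = z \<longleftrightarrow> norm z = 1"
proof
  assume "1 / cnj z = z"
  then have "z * cnj z = 1"
    using assms by (simp add: field_simps)
  then have "(norm z)\<^sup>2 = 1"
    using complex_norm_square[of z] by (metis of_real_eq_1_iff)
  then show "norm z = 1"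
    using norm_ge_zero[of z] by (auto simp: power2_eq_1_iff)
qed (rule one_div_cnj_unit)

lemma poly_poly_star: "poly (poly_star m p) z = (\<Sum>k\<le>m. cnj (coeff p (m - k)) * z ^ k)"
  by (simp add: poly_star_def poly_sum poly_monom)

lemma degree_poly_star_le: "degree (poly_star m p) \<le> m"
  unfolding poly_star_def by (rule degree_le) (auto simp: coeff_sum coeff_monom)

lemma poly_star_at_0: "poly (poly_star m p) 0 = cnj (coeff p m)"
  by (simp add: poly_poly_star power_0_left sum.atMost_shift del: sum.atMost_Suc)

lemma poly_poly_star_eq:
  fixes p :: "complex poly"
  assumes "degree p \<le> m" and "z \<noteq> 0"
  shows "poly (poly_star m p) z = z ^ m * cnj (poly p (1 / cnj z))"
proof -
  have "poly p (1 / cnj z) = poly (\<Sum>i\<le>m. monom (coeff p i) i) (1 / cnj z)"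
    using assms(1) by (simp add: poly_as_sum_of_monoms')
  then have "cnj (poly p (1 / cnj z)) = (\<Sum>i\<le>m. cnj (coeff p i) * (1 / z) ^ i)"
    by (simp add: poly_sum poly_monom)
  then have "z ^ m * cnj (poly p (1 / cnj z)) = (\<Sum>i\<le>m. cnj (coeff p i) * z ^ (m - i))"
    using assms(2) by (simp add: sum_distrib_left power_diff power_one_over field_simps)
  also have "\<dots> = (\<Sum>k\<le>m. cnj (coeff p (m - k)) * z ^ k)"
    by (rule sum.reindex_bij_witness[where i = "\<lambda>k. m - k" and j = "\<lambda>i. m - i"]) auto
  finally show ?thesis
    by (simp add: poly_poly_star)
qed

lemma poly_poly_star_unit:
  fixes p :: "complex poly"
  shows "degree p \<le> m \<Longrightarrow> norm z = 1 \<Longrightarrow> poly (poly_star m p) z = z ^ m * cnj (poly p z)"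
  using poly_poly_star_eq[of p m z] one_div_cnj_unit[of z] by fastforce


section \<open>The inner product of \<open>L\<^sup>2(\<mu>)\<close> and the Christoffel--Darboux kernel\<close>

locale OPUC =
  fixes \<mu> :: "complex measure" and \<phi> :: "nat \<Rightarrow> complex poly"
  assumes measure_on_circle: "prob_measure_on_circle \<mu>"
    and orthonormal: "is_OPUC \<mu> \<phi>"
begin

lemma sets_eq_borel: "sets \<mu> = sets borel"
  using measure_on_circle by (simp add: prob_measure_on_circle_def)

lemma AE_norm_eq_1: "AE z in \<mu>. norm z = 1"
proof (rule AE_I')
  have "emeasure \<mu> (- sphere 0 1) = 0"
    using measure_on_circle by (simp add: prob_measure_on_circle_def)
  then show "- sphere 0 1 \<in> null_sets \<mu>"
    by (auto intro: null_setsI borel_open simp: sets_eq_borel open_Compl)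
qed auto

lemma measurable_continuous:
  "continuous_on UNIV (f :: complex \<Rightarrow> complex) \<Longrightarrow> f \<in> borel_measurable \<mu>"
  by (subst measurable_cong_sets[OF sets_eq_borel refl]) (rule borel_measurable_continuous_onI)

lemma integrable_continuous:
  assumes "continuous_on UNIV (f :: complex \<Rightarrow> complex)"
  shows "integrable \<mu> f"
proof -
  have "compact (f ` sphere 0 1)"
    by (rule compact_continuous_image[OF continuous_on_subset[OF assms]]) auto
  then obtain B where B: "\<And>x. x \<in> f ` sphere 0 1 \<Longrightarrow> norm x \<le> B"
    using compact_imp_bounded[of "f ` sphere 0 1"] unfolding bounded_iff by blast
  have "AE z in \<mu>. norm (f z) \<le> B"
    using AE_norm_eq_1 by eventually_elim (use B in auto)
  moreover have "finite_measure \<mu>"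
    using measure_on_circle by (simp add: prob_measure_on_circle_def prob_space_def)
  ultimately show ?thesis
    using finite_measure.integrable_const_bound measurable_continuous[OF assms] by blast
qed

definition poly_inner :: "complex poly \<Rightarrow> complex poly \<Rightarrow> complex" where
  "poly_inner p q = (LINT z|\<mu>. poly p z * cnj (poly q z))"

lemma continuous_poly_mult_cnj: "continuous_on UNIV (\<lambda>z. poly p z * cnj (poly q z))"
  by (intro continuous_intros continuous_on_poly continuous_on_cnj continuous_on_id)

lemma integrable_poly_mult_cnj: "integrable \<mu> (\<lambda>z. poly p z * cnj (poly q z))"
  by (rule integrable_continuous[OF continuous_poly_mult_cnj])

lemma poly_inner_eq_on_circle:
  assumes "\<And>z. norm z = 1 \<Longrightarrow> poly p z * cnj (poly q z) = poly p' z * cnj (poly q' z)"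
  shows "poly_inner p q = poly_inner p' q'"
  unfolding poly_inner_def using AE_norm_eq_1 assms
  by (intro integral_cong_AE measurable_continuous continuous_poly_mult_cnj) auto

lemma poly_inner_add_left: "poly_inner (p + q) r = poly_inner p r + poly_inner q r"
  unfolding poly_inner_def by (simp add: distrib_right integrable_poly_mult_cnj)

lemma poly_inner_diff_left: "poly_inner (p - q) r = poly_inner p r - poly_inner q r"
  unfolding poly_inner_def by (simp add: left_diff_distrib integrable_poly_mult_cnj)

lemma poly_inner_smult_left: "poly_inner (smult c p) r = c * poly_inner p r"
  unfolding poly_inner_def by (simp add: mult.assoc)

lemma poly_inner_commute: "poly_inner q p = cnj (poly_inner p q)"
proof -
  have "cnj (poly_inner p q) = (LINT z|\<mu>. cnj (poly p z * cnj (poly q z)))"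
    unfolding poly_inner_def by (rule Bochner_Integration.integral_cnj[symmetric])
  then show ?thesis
    by (simp add: poly_inner_def mult.commute)
qed

lemma poly_inner_add_right: "poly_inner r (p + q) = poly_inner r p + poly_inner r q"
  by (metis poly_inner_commute poly_inner_add_left complex_cnj_add)

lemma poly_inner_diff_right: "poly_inner r (p - q) = poly_inner r p - poly_inner r q"
  by (metis poly_inner_commute poly_inner_diff_left complex_cnj_diff)

lemma poly_inner_smult_right: "poly_inner r (smult c p) = cnj c * poly_inner r p"
  by (metis poly_inner_commute poly_inner_smult_left complex_cnj_mult)

lemma poly_inner_sum_left: "poly_inner (\<Sum>k\<in>A. f k) r = (\<Sum>k\<in>A. poly_inner (f k) r)"
  by (induction A rule: infinite_finite_induct)
    (simp_all add: poly_inner_add_left poly_inner_def[of 0])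

lemma poly_inner_sum_right: "poly_inner r (\<Sum>k\<in>A. f k) = (\<Sum>k\<in>A. poly_inner r (f k))"
  by (induction A rule: infinite_finite_induct)
    (simp_all add: poly_inner_add_right poly_inner_def[of _ 0])

lemma poly_inner_pCons_0: "poly_inner (pCons 0 p) (pCons 0 q) = poly_inner p q"
proof (rule poly_inner_eq_on_circle)
  fix z :: complex assume z: "norm z = 1"
  then have "z \<noteq> 0"
    by auto
  then show "poly (pCons 0 p) z * cnj (poly (pCons 0 q) z) = poly p z * cnj (poly q z)"
    by (simp add: cnj_unit[OF z] field_simps)
qed

lemma poly_inner_poly_star_pCons_0:
  assumes "degree p \<le> Suc m" and "degree r \<le> m"
  shows "poly_inner (poly_star (Suc m) p) (pCons 0 r) = poly_inner (poly_star m r) p"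
proof (rule poly_inner_eq_on_circle)
  fix z :: complex assume z: "norm z = 1"
  then have "z \<noteq> 0"
    by auto
  then show "poly (poly_star (Suc m) p) z * cnj (poly (pCons 0 r) z)
      = poly (poly_star m r) z * cnj (poly p z)"
    by (simp add: poly_poly_star_unit[OF assms(1) z] poly_poly_star_unit[OF assms(2) z]
        cnj_unit[OF z] field_simps)
qed

lemma poly_inner_linear_factor:
  assumes "norm z\<^sub>0 = 1"
  shows "poly_inner ([:-z\<^sub>0, 1:] * r) q = poly_inner (smult (- z\<^sub>0) (pCons 0 r)) ([:-z\<^sub>0, 1:] * q)"
proof (rule poly_inner_eq_on_circle)
  fix z :: complex assume z: "norm z = 1"
  have "z \<noteq> 0" and "z\<^sub>0 \<noteq> 0"
    using z assms by auto
  then show "poly ([:-z\<^sub>0, 1:] * r) z * cnj (poly q z)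
      = poly (smult (- z\<^sub>0) (pCons 0 r)) z * cnj (poly ([:-z\<^sub>0, 1:] * q) z)"
    by (simp add: cnj_unit[OF z] cnj_unit[OF assms] field_simps)
qed

lemma poly_inner_reflected_factor:
  assumes "z\<^sub>0 \<noteq> 0"
  shows "poly_inner ([:- 1 / cnj z\<^sub>0, 1:] * p) (pCons 0 s)
           = poly_inner (smult (- 1 / cnj z\<^sub>0) p) ([:-z\<^sub>0, 1:] * s)"
proof (rule poly_inner_eq_on_circle)
  fix z :: complex assume z: "norm z = 1"
  then have "z \<noteq> 0"
    by auto
  then show "poly ([:- 1 / cnj z\<^sub>0, 1:] * p) z * cnj (poly (pCons 0 s) z)
      = poly (smult (- 1 / cnj z\<^sub>0) p) z * cnj (poly ([:-z\<^sub>0, 1:] * s) z)"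
    using assms by (simp add: cnj_unit[OF z] field_simps)
qed

lemma poly_inner_phi: "poly_inner (\<phi> m) (\<phi> n) = (if m = n then 1 else 0)"
  using orthonormal unfolding is_OPUC_def poly_inner_def by blast

lemma degree_phi: "degree (\<phi> n) = n"
  using orthonormal unfolding is_OPUC_def by blast

lemma lead_coeff_phi_nonzero: "lead_coeff (\<phi> n) \<noteq> 0"
proof -
  have "Re (lead_coeff (\<phi> n)) > 0"
    using orthonormal unfolding is_OPUC_def by blast
  then show ?thesis
    by auto
qed

lemma phi_span:
  assumes "degree p \<le> N"
  obtains c where "p = (\<Sum>k\<le>N. smult (c k) (\<phi> k))"
  using assms
proof (induction N arbitrary: p thesis)
  case 0
  have "p = smult (coeff p 0 / lead_coeff (\<phi> 0)) (\<phi> 0)"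
  proof (rule poly_eqI)
    fix i
    show "coeff p i = coeff (smult (coeff p 0 / lead_coeff (\<phi> 0)) (\<phi> 0)) i"
      using 0 degree_phi[of 0] lead_coeff_phi_nonzero[of 0] by (cases i) (auto simp: coeff_eq_0)
  qed
  then show ?case using "0.prems"(1)[of "\<lambda>_. coeff p 0 / lead_coeff (\<phi> 0)"] by simp
next
  case (Suc N)
  define a where "a = coeff p (Suc N) / lead_coeff (\<phi> (Suc N))"
  have "degree (p - smult a (\<phi> (Suc N))) \<le> N"
  proof (rule degree_le, intro allI impI)
    fix i assume "N < i"
    then consider "i = Suc N" | "Suc N < i" by linarith
    then show "coeff (p - smult a (\<phi> (Suc N))) i = 0"
      using Suc.prems(2) degree_phi[of "Suc N"] lead_coeff_phi_nonzero[of "Suc N"]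
      by cases (auto simp: a_def coeff_eq_0)
  qed
  then obtain c where "p - smult a (\<phi> (Suc N)) = (\<Sum>k\<le>N. smult (c k) (\<phi> k))"
    using Suc.IH by blast
  then have "p = (\<Sum>k\<le>Suc N. smult ((c(Suc N := a)) k) (\<phi> k))"
    by (simp add: algebra_simps)
  then show ?case by (rule Suc.prems(1))
qed

lemma phi_expansion:
  assumes "degree p \<le> N"
  shows "p = (\<Sum>k\<le>N. smult (poly_inner p (\<phi> k)) (\<phi> k))"
proof -
  obtain c where c: "p = (\<Sum>k\<le>N. smult (c k) (\<phi> k))"
    using phi_span[OF assms] .
  have "poly_inner p (\<phi> m) = c m" if "m \<le> N" for m
    using that by (simp add: c poly_inner_sum_left poly_inner_smult_left poly_inner_phi if_distrib sum.delta
                     cong: if_cong)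
  then have "(\<Sum>k\<le>N. smult (poly_inner p (\<phi> k)) (\<phi> k)) = (\<Sum>k\<le>N. smult (c k) (\<phi> k))"
    by (intro sum.cong) auto
  with c show ?thesis
    by simp
qed

lemma poly_inner_self_Parseval:
  assumes "degree p \<le> N"
  shows "poly_inner p p = of_real (\<Sum>k\<le>N. (cmod (poly_inner p (\<phi> k)))\<^sup>2)"
proof -
  have "poly_inner p p = poly_inner p (\<Sum>k\<le>N. smult (poly_inner p (\<phi> k)) (\<phi> k))"
    using phi_expansion[OF assms] by simp
  also have "\<dots> = (\<Sum>k\<le>N. poly_inner p (\<phi> k) * cnj (poly_inner p (\<phi> k)))"
    by (simp add: poly_inner_sum_right poly_inner_smult_right mult.commute)
  also have "\<dots> = (\<Sum>k\<le>N. of_real ((cmod (poly_inner p (\<phi> k)))\<^sup>2))"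
    by (simp only: complex_norm_square)
  finally show ?thesis
    by simp
qed

lemma poly_inner_self_eq_0D:
  assumes "poly_inner p p = 0"
  shows "p = 0"
proof -
  have "complex_of_real (\<Sum>k\<le>degree p. (cmod (poly_inner p (\<phi> k)))\<^sup>2) = 0"
    using poly_inner_self_Parseval[of p "degree p", OF order_refl] assms by (simp only:)
  then have "(\<Sum>k\<le>degree p. (cmod (poly_inner p (\<phi> k)))\<^sup>2) = 0"
    by (simp only: of_real_eq_0_iff)
  then have "poly_inner p (\<phi> k) = 0" if "k \<le> degree p" for k
    using that sum_nonneg_eq_0_iff[of "{..degree p}" "\<lambda>k. (cmod (poly_inner p (\<phi> k)))\<^sup>2"] by simp
  then show "p = 0"
    using phi_expansion[of p "degree p"] by simp
qed

lemma poly_inner_phi_degree_less: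
  assumes "degree r < m"
  shows "poly_inner (\<phi> m) r = 0"
proof -
  have "poly_inner (\<phi> m) r = poly_inner (\<phi> m) (\<Sum>k\<le>m - 1. smult (poly_inner r (\<phi> k)) (\<phi> k))"
    using phi_expansion[of r "m - 1"] assms by simp
  also have "\<dots> = (\<Sum>k\<le>m - 1. cnj (poly_inner r (\<phi> k)) * poly_inner (\<phi> m) (\<phi> k))"
    by (simp add: poly_inner_sum_right poly_inner_smult_right)
  also have "\<dots> = 0"
    using assms by (intro sum.neutral) (auto simp: poly_inner_phi)
  finally show ?thesis .
qed

definition CD_poly :: "nat \<Rightarrow> complex \<Rightarrow> complex poly" where
  "CD_poly n w = (\<Sum>k<n. smult (cnj (poly (\<phi> k) w)) (\<phi> k))"

lemma poly_CD_poly: "poly (CD_poly n w) z = CD_kernel \<phi> n z w"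
  by (simp add: CD_poly_def CD_kernel_def poly_sum mult.commute)

lemma degree_CD_poly_le: "degree (CD_poly n w) \<le> n - 1"
proof (rule degree_le, intro allI impI)
  fix i assume "n - 1 < i"
  then have "coeff (\<phi> k) i = 0" if "k < n" for k
    using that degree_phi[of k] by (intro coeff_eq_0) simp
  then show "coeff (CD_poly n w) i = 0"
    by (simp add: CD_poly_def coeff_sum)
qed

lemma poly_inner_CD_poly:
  assumes "degree p < n"
  shows "poly_inner p (CD_poly n w) = poly p w"
proof -
  have "{..<n} = {..n - 1}"
    using assms by auto
  then have "poly_inner p (CD_poly n w) = poly (\<Sum>k\<le>n - 1. smult (poly_inner p (\<phi> k)) (\<phi> k)) w"
    by (simp add: CD_poly_def poly_inner_sum_right poly_inner_smult_right poly_sum mult.commute)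
  also have "\<dots> = poly p w"
    using phi_expansion[of p "n - 1"] assms by simp
  finally show ?thesis .
qed

lemma CD_kernel_diag_nonzero:
  assumes "n \<ge> 1"
  shows "CD_kernel \<phi> n w w \<noteq> 0"
proof -
  have "poly (\<phi> 0) w \<noteq> 0"
    using degree_phi[of 0] lead_coeff_phi_nonzero[of 0] by (simp add: poly_altdef)
  then have "0 < (\<Sum>k<n. (cmod (poly (\<phi> k) w))\<^sup>2)"
    using assms by (intro sum_pos2[of _ 0]) auto
  also have "\<dots> = Re (CD_kernel \<phi> n w w)"
    by (simp add: CD_kernel_def complex_mult_cnj cmod_power2)
  finally show ?thesis
    by auto
qed

lemma eq_smult_CD_poly_if_orthogonal:
  assumes n: "n \<ge> 2" and deg: "degree q < n"
    and orth: "\<And>r. degree r < n - 1 \<Longrightarrow> poly_inner ([:-z\<^sub>0, 1:] * r) q = 0"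
  shows "q = smult (poly q z\<^sub>0 / CD_kernel \<phi> n z\<^sub>0 z\<^sub>0) (CD_poly n z\<^sub>0)"
proof -
  define c where "c = poly q z\<^sub>0 / CD_kernel \<phi> n z\<^sub>0 z\<^sub>0"
  define q' where "q' = q - smult c (CD_poly n z\<^sub>0)"
  have deg_q': "degree q' < n"
    unfolding q'_def using deg degree_CD_poly_le[of n z\<^sub>0] n
    by (intro degree_diff_less) (auto intro: le_less_trans[OF degree_smult_le])
  have "poly q' z\<^sub>0 = 0"
    using CD_kernel_diag_nonzero[of n] n by (simp add: q'_def c_def poly_CD_poly)
  then obtain r where q'r: "q' = [:-z\<^sub>0, 1:] * r"
    by (metis dvdE poly_eq_0_iff_dvd)
  have "degree r < n - 1"
    using deg_q' n q'r by (cases "r = 0") (auto simp: degree_mult_eq simp del: mult_pCons_left)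
  then have "poly_inner q' q = 0"
    unfolding q'r by (rule orth)
  moreover have "poly_inner q' (CD_poly n z\<^sub>0) = 0"
    using poly_inner_CD_poly[OF deg_q'] \<open>poly q' z\<^sub>0 = 0\<close> by simp
  ultimately have "poly_inner q' q' = 0"
    by (simp add: q'_def poly_inner_diff_right poly_inner_smult_right)
  then show ?thesis
    unfolding c_def[symmetric] q'_def by (metis poly_inner_self_eq_0D eq_iff_diff_eq_0)
qed


section \<open>Paraorthogonal polynomials\<close>

lemma degree_paraorth:
  assumes "n \<ge> 1"
  shows "degree (paraorth \<phi> n b) = n"
proof -
  have star: "degree (poly_star (n - 1) (\<phi> (n - 1))) < n"
    using degree_poly_star_le[of "n - 1" "\<phi> (n - 1)"] assms by linarith
  have "degree ([:0, 1:] * \<phi> (n - 1)) = n"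
    using assms degree_phi[of "n - 1"] lead_coeff_phi_nonzero[of "n - 1"]
    by (subst degree_mult_eq) auto
  moreover have "degree (smult (cnj b) (poly_star (n - 1) (\<phi> (n - 1)))) < n"
    using star degree_smult_le le_less_trans by blast
  ultimately show ?thesis
    unfolding paraorth_def
    using degree_add_eq_left[of "- smult (cnj b) (poly_star (n - 1) (\<phi> (n - 1)))"] by simp
qed

lemma paraorth_nonzero: "n \<ge> 1 \<Longrightarrow> paraorth \<phi> n b \<noteq> 0"
  using degree_paraorth[of n b] by auto

lemma poly_paraorth_0_nonzero: "b \<noteq> 0 \<Longrightarrow> poly (paraorth \<phi> n b) 0 \<noteq> 0"
  using lead_coeff_phi_nonzero[of "n - 1"]
  by (simp add: paraorth_def poly_star_at_0 degree_phi)

lemma paraorth_reflection: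
  assumes "n \<ge> 1" and "norm b = 1" and "z \<noteq> 0"
  shows "z ^ n * cnj (poly (paraorth \<phi> n b) (1 / cnj z)) = - b * poly (paraorth \<phi> n b) z"
proof -
  obtain m where n: "n = Suc m"
    using assms(1) by (cases n) auto
  define w where "w = 1 / cnj z"
  have deg: "degree (\<phi> m) \<le> m"
    by (simp add: degree_phi)
  have star_w: "poly (poly_star m (\<phi> m)) w = w ^ m * cnj (poly (\<phi> m) z)"
    using poly_poly_star_eq[OF deg, of w] assms(3) by (simp add: w_def)
  have star_z: "poly (poly_star m (\<phi> m)) z = z ^ m * cnj (poly (\<phi> m) w)"
    using poly_poly_star_eq[OF deg assms(3)] by (simp add: w_def)
  have bb: "b * cnj b = 1"
    using cnj_mult_self_unit[OF assms(2)] by (simp add: mult.commute)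
  have "poly (paraorth \<phi> n b) w = w * poly (\<phi> m) w - cnj b * (w ^ m * cnj (poly (\<phi> m) z))"
    by (simp add: paraorth_def star_w n)
  then have "cnj (poly (paraorth \<phi> n b) w)
      = (1 / z) * cnj (poly (\<phi> m) w) - b * ((1 / z) ^ m * poly (\<phi> m) z)"
    by (simp add: w_def)
  then have "z ^ n * cnj (poly (paraorth \<phi> n b) w)
        = z ^ m * cnj (poly (\<phi> m) w) - b * z * poly (\<phi> m) z"
    using assms(3) by (simp add: n field_simps power_one_over)
  also have "\<dots> = - b * poly (paraorth \<phi> n b) z"
    using bb by (simp add: paraorth_def star_z n algebra_simps)
  finally show ?thesis
    by (simp add: w_def)
qed

lemma paraorth_orthogonal:
  assumes "n \<ge> 2" and "degree r < n - 1"
  shows "poly_inner (paraorth \<phi> n b) (pCons 0 r) = 0"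
proof -
  obtain m where n: "n = Suc (Suc m)"
    using assms(1) by (metis add_2_eq_Suc le_Suc_ex)
  have "poly_inner (pCons 0 (\<phi> (Suc m))) (pCons 0 r) = 0"
    using assms(2) by (simp add: poly_inner_pCons_0 poly_inner_phi_degree_less n)
  moreover have "poly_inner (poly_star (Suc m) (\<phi> (Suc m))) (pCons 0 r) = 0"
  proof -
    have "degree (poly_star m r) < Suc m"
      using degree_poly_star_le[of m r] by simp
    then have "poly_inner (\<phi> (Suc m)) (poly_star m r) = 0"
      by (rule poly_inner_phi_degree_less)
    then show ?thesis
      using assms(2) by (simp add: poly_inner_poly_star_pCons_0 degree_phi n poly_inner_commute[of _ "\<phi> _"])
  qed
  ultimately show ?thesis
    by (simp add: paraorth_def n poly_inner_diff_left poly_inner_smult_left)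
qed

lemma paraorth_eq_CD_kernel:
  assumes n: "n \<ge> 2" and z\<^sub>0: "norm z\<^sub>0 = 1" and zero: "poly (paraorth \<phi> n b) z\<^sub>0 = 0"
  obtains c where "c \<noteq> 0"
    and "\<And>z. poly (paraorth \<phi> n b) z = c * (z - z\<^sub>0) * CD_kernel \<phi> n z z\<^sub>0"
proof -
  define H where "H = paraorth \<phi> n b"
  obtain q where Hq: "H = [:-z\<^sub>0, 1:] * q"
    using zero unfolding H_def by (metis dvdE poly_eq_0_iff_dvd)
  have "H \<noteq> 0"
    using n unfolding H_def by (intro paraorth_nonzero) simp
  then have "q \<noteq> 0" and "degree H = Suc (degree q)"
    using Hq by (auto simp: degree_mult_eq simp del: mult_pCons_left)
  then have "degree q < n"
    using degree_paraorth[of n b] n unfolding H_def by simp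
  moreover have "poly_inner ([:-z\<^sub>0, 1:] * r) q = 0" if "degree r < n - 1" for r
  proof -
    have "poly_inner ([:-z\<^sub>0, 1:] * r) q = - z\<^sub>0 * cnj (poly_inner H (pCons 0 r))"
      unfolding poly_inner_linear_factor[OF z\<^sub>0] Hq[symmetric]
      by (simp only: poly_inner_smult_left poly_inner_commute[of "pCons 0 r" H])
    also have "poly_inner H (pCons 0 r) = 0"
      unfolding H_def using n that by (rule paraorth_orthogonal)
    finally show ?thesis
      by simp
  qed
  ultimately have "q = smult (poly q z\<^sub>0 / CD_kernel \<phi> n z\<^sub>0 z\<^sub>0) (CD_poly n z\<^sub>0)"
    using n by (intro eq_smult_CD_poly_if_orthogonal)
  then obtain c where q: "q = smult c (CD_poly n z\<^sub>0)"
    by blast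
  show ?thesis
  proof
    show "c \<noteq> 0"
      using q \<open>q \<noteq> 0\<close> by auto
    show "poly (paraorth \<phi> n b) z = c * (z - z\<^sub>0) * CD_kernel \<phi> n z z\<^sub>0" for z
      unfolding H_def[symmetric] Hq q by (simp add: poly_CD_poly algebra_simps)
  qed
qed

lemma paraorth_zero_on_circle:
  assumes n: "n \<ge> 2" and b: "norm b = 1" and zero: "poly (paraorth \<phi> n b) z\<^sub>0 = 0"
  shows "norm z\<^sub>0 = 1"
proof (rule ccontr)
  (* Otherwise the reflection z\<^sub>1 of z\<^sub>0 in the circle is a second zero, and for
     H = (z - z\<^sub>1)(z - z\<^sub>0) s the orthogonality of H to z s says that (z - z\<^sub>0) s has norm 0. *)
  assume "norm z\<^sub>0 \<noteq> 1"
  define H where "H = paraorth \<phi> n b"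
  define z\<^sub>1 where "z\<^sub>1 = 1 / cnj z\<^sub>0"
  have "b \<noteq> 0"
    using b by auto
  then have "z\<^sub>0 \<noteq> 0"
    using poly_paraorth_0_nonzero[of b n] zero by auto
  have "poly H z\<^sub>1 = 0"
    using paraorth_reflection[of n b z\<^sub>0] n b zero \<open>z\<^sub>0 \<noteq> 0\<close> by (simp add: H_def z\<^sub>1_def)
  moreover have "z\<^sub>1 \<noteq> z\<^sub>0"
    using one_div_cnj_eq_self_iff[OF \<open>z\<^sub>0 \<noteq> 0\<close>] \<open>norm z\<^sub>0 \<noteq> 1\<close> by (simp add: z\<^sub>1_def)
  moreover obtain q where Hq: "H = [:-z\<^sub>0, 1:] * q"
    using zero unfolding H_def by (metis dvdE poly_eq_0_iff_dvd)
  ultimately have "poly q z\<^sub>1 = 0"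
    by simp
  then obtain s where qs: "q = [:-z\<^sub>1, 1:] * s"
    by (metis dvdE poly_eq_0_iff_dvd)
  have "H \<noteq> 0"
    using n unfolding H_def by (intro paraorth_nonzero) simp
  then have "s \<noteq> 0" and "degree H = degree s + 2"
    using Hq qs by (auto simp: degree_mult_eq simp del: mult_pCons_left)
  then have "degree s < n - 1"
    using degree_paraorth[of n b] n unfolding H_def by simp
  then have "poly_inner H (pCons 0 s) = 0"
    unfolding H_def using n by (intro paraorth_orthogonal)
  moreover have "H = [:- 1 / cnj z\<^sub>0, 1:] * ([:-z\<^sub>0, 1:] * s)"
    unfolding Hq qs z\<^sub>1_def by (simp only: mult.left_commute minus_divide_left)
  ultimately have "- 1 / cnj z\<^sub>0 * poly_inner ([:-z\<^sub>0, 1:] * s) ([:-z\<^sub>0, 1:] * s) = 0"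
    by (simp only: poly_inner_reflected_factor[OF \<open>z\<^sub>0 \<noteq> 0\<close>] poly_inner_smult_left)
  then have "[:-z\<^sub>0, 1:] * s = 0"
    using \<open>z\<^sub>0 \<noteq> 0\<close> by (intro poly_inner_self_eq_0D) simp
  then show False
    using \<open>s \<noteq> 0\<close> by (simp del: mult_pCons_left)
qed

lemma paraorth_zero_angle_exists:
  assumes "n \<ge> 2" and "norm b = 1"
  obtains t where "poly (paraorth \<phi> n b) (cis t) = 0"
proof -
  have "degree (paraorth \<phi> n b) \<noteq> 0"
    using degree_paraorth[of n b] assms(1) by simp
  then have "\<not> constant (poly (paraorth \<phi> n b))"
    by (simp add: constant_degree)
  then obtain z where z: "poly (paraorth \<phi> n b) z = 0"
    using fundamental_theorem_of_algebra by blast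
  have "norm z = 1"
    using paraorth_zero_on_circle[OF assms z] .
  then have "z \<noteq> 0"
    by auto
  with \<open>norm z = 1\<close> have "cis (Arg z) = z"
    by (simp add: cis_Arg sgn_div_norm)
  then show ?thesis
    using that z by metis
qed

end


section \<open>Labelling the points of a separated set\<close>

definition labelled_point :: "real set \<Rightarrow> real \<Rightarrow> int \<Rightarrow> real \<Rightarrow> bool" where
  "labelled_point Z \<Theta> j t \<longleftrightarrow> t \<in> Z \<and>
     (if j \<ge> 0 then \<Theta> \<le> t \<and> int (card (Z \<inter> {\<Theta>..<t})) = j
      else t < \<Theta> \<and> int (card (Z \<inter> {t..<\<Theta>})) = - j)"

lemma zero_angle_eq_The_labelled_point:
  "zero_angle \<phi> \<beta> n \<Theta> j = (THE t. labelled_point (zero_angles \<phi> \<beta> n) \<Theta> j t)"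
  unfolding zero_angle_def labelled_point_def ..

definition signed_count :: "real set \<Rightarrow> real \<Rightarrow> real \<Rightarrow> int" where
  "signed_count Z \<Theta> t =
     (if \<Theta> \<le> t then int (card (Z \<inter> {\<Theta>..<t})) else - int (card (Z \<inter> {t..<\<Theta>})))"

locale separated_set =
  fixes Z :: "real set" and d D :: real
  assumes separation_pos: "d > 0"
    and separated: "\<And>s t. s \<in> Z \<Longrightarrow> t \<in> Z \<Longrightarrow> s < t \<Longrightarrow> s + d < t"
    and next_close: "\<And>t. t \<in> Z \<Longrightarrow> \<exists>s\<in>Z. t < s \<and> s < t + D"
    and unbounded_below: "\<And>x. \<exists>t\<in>Z. t < x"
begin

lemma finite_Int_atLeastAtMost: "finite (Z \<inter> {a..b})"
proof -
  let ?f = "\<lambda>t. \<lfloor>t / d\<rfloor>"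
  have "inj_on ?f Z"
  proof (rule inj_onI)
    fix s t assume "s \<in> Z" "t \<in> Z" and floor_eq: "?f s = ?f t"
    have "\<bar>s / d - t / d\<bar> < 1"
      using floor_eq real_of_int_floor_add_one_gt[of "s / d"] real_of_int_floor_add_one_gt[of "t / d"]
        of_int_floor_le[of "s / d"] of_int_floor_le[of "t / d"] by linarith
    then have "\<bar>s - t\<bar> < d"
      using separation_pos by (simp add: diff_divide_distrib[symmetric] abs_divide)
    then show "s = t"
      using separated[OF \<open>s \<in> Z\<close> \<open>t \<in> Z\<close>] separated[OF \<open>t \<in> Z\<close> \<open>s \<in> Z\<close>] by linarith
  qed
  moreover have "?f ` (Z \<inter> {a..b}) \<subseteq> {?f a..?f b}"
    using separation_pos by (auto intro!: floor_mono divide_right_mono)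
  ultimately show ?thesis
    by (meson finite_atLeastAtMost_int finite_imageD finite_subset inf_le1 inj_on_subset)
qed

lemma finite_Int_atLeastLessThan: "finite (Z \<inter> {a..<b})"
  by (rule finite_subset[OF _ finite_Int_atLeastAtMost[of a b]]) auto

lemma next_point:
  assumes "t \<in> Z"
  obtains t' where "t' \<in> Z" "t < t'" "t' < t + D" "\<And>u. u \<in> Z \<Longrightarrow> t < u \<Longrightarrow> t' \<le> u"
proof -
  define S where "S = Z \<inter> {t<..<t + D}"
  have "finite S"
    unfolding S_def by (rule finite_subset[OF _ finite_Int_atLeastAtMost[of t "t + D"]]) auto
  moreover have "S \<noteq> {}"
    using next_close[OF assms] unfolding S_def by auto
  ultimately have "Min S \<in> S" and "\<And>u. u \<in> S \<Longrightarrow> Min S \<le> u"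
    by simp_all
  then show ?thesis
    using that[of "Min S"] unfolding S_def by force
qed

lemma previous_point:
  obtains t' where "t' \<in> Z" "t' < x" "\<And>u. u \<in> Z \<Longrightarrow> u < x \<Longrightarrow> u \<le> t'"
proof -
  obtain y where "y \<in> Z" "y < x"
    using unbounded_below by blast
  define S where "S = Z \<inter> {y..<x}"
  have "finite S"
    unfolding S_def by (rule finite_Int_atLeastLessThan)
  moreover have "S \<noteq> {}"
    using \<open>y \<in> Z\<close> \<open>y < x\<close> unfolding S_def by auto
  ultimately have "Max S \<in> S" and "\<And>u. u \<in> S \<Longrightarrow> u \<le> Max S"
    by simp_all
  then show ?thesis
    using that[of "Max S"] unfolding S_def by force
qed

lemma signed_count_negative: "t \<in> Z \<Longrightarrow> t < \<Theta> \<Longrightarrow> signed_count Z \<Theta> t < 0"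
  using card_gt_0_iff[of "Z \<inter> {t..<\<Theta>}"] finite_Int_atLeastLessThan[of t \<Theta>]
  by (auto simp: signed_count_def)

lemma labelled_point_iff: "labelled_point Z \<Theta> j t \<longleftrightarrow> t \<in> Z \<and> signed_count Z \<Theta> t = j"
  using signed_count_negative[of t \<Theta>]
  by (auto simp: labelled_point_def signed_count_def not_le)

lemma signed_count_strict_mono:
  assumes "s \<in> Z" "t \<in> Z" "s < t"
  shows "signed_count Z \<Theta> s < signed_count Z \<Theta> t"
proof -
  consider "\<Theta> \<le> s" | "s < \<Theta>" "\<Theta> \<le> t" | "t < \<Theta>"
    by linarith
  then show ?thesis
  proof cases
    case 1
    then have "s \<in> Z \<inter> {\<Theta>..<t}" and "s \<notin> Z \<inter> {\<Theta>..<s}"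
      and "Z \<inter> {\<Theta>..<s} \<subseteq> Z \<inter> {\<Theta>..<t}"
      using assms by auto
    then have "Z \<inter> {\<Theta>..<s} \<subset> Z \<inter> {\<Theta>..<t}"
      by blast
    then show ?thesis
      using 1 assms(3) by (simp add: signed_count_def psubset_card_mono[OF finite_Int_atLeastLessThan])
  next
    case 2
    then have "0 \<le> signed_count Z \<Theta> t"
      by (simp add: signed_count_def)
    then show ?thesis
      using signed_count_negative[OF assms(1) 2(1)] by linarith
  next
    case 3
    then have "s \<in> Z \<inter> {s..<\<Theta>}" and "s \<notin> Z \<inter> {t..<\<Theta>}"
      and "Z \<inter> {t..<\<Theta>} \<subseteq> Z \<inter> {s..<\<Theta>}"
      using assms by auto
    then have "Z \<inter> {t..<\<Theta>} \<subset> Z \<inter> {s..<\<Theta>}"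
      by blast
    then show ?thesis
      using 3 assms(3) by (simp add: signed_count_def psubset_card_mono[OF finite_Int_atLeastLessThan])
  qed
qed

lemma signed_count_next:
  assumes "t \<in> Z" "t' \<in> Z" "t < t'" and between: "\<And>u. u \<in> Z \<Longrightarrow> t < u \<Longrightarrow> t' \<le> u"
  shows "signed_count Z \<Theta> t' = signed_count Z \<Theta> t + 1"
proof -
  consider "\<Theta> \<le> t" | "t < \<Theta>" "\<Theta> \<le> t'" | "t' < \<Theta>"
    by linarith
  then show ?thesis
  proof cases
    case 1
    then have "Z \<inter> {\<Theta>..<t'} = insert t (Z \<inter> {\<Theta>..<t})"
      using assms by force
    then show ?thesis
      using 1 assms(3) by (simp add: signed_count_def finite_Int_atLeastLessThan)
  next
    case 2
    then have "Z \<inter> {\<Theta>..<t'} = {}" and "Z \<inter> {t..<\<Theta>} = {t}"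
      using assms by force+
    then show ?thesis
      using 2 by (simp add: signed_count_def)
  next
    case 3
    then have "Z \<inter> {t..<\<Theta>} = insert t (Z \<inter> {t'..<\<Theta>})"
      using assms by force
    then show ?thesis
      using 3 assms(3) by (simp add: signed_count_def finite_Int_atLeastLessThan)
  qed
qed

lemma signed_count_surj: "\<exists>t\<in>Z. signed_count Z \<Theta> t = j"
proof (induction j rule: int_induct[where k = "-1"])
  case base
  obtain t where "t \<in> Z" "t < \<Theta>" "\<And>u. u \<in> Z \<Longrightarrow> u < \<Theta> \<Longrightarrow> u \<le> t"
    using previous_point[of \<Theta>] by blast
  then have "Z \<inter> {t..<\<Theta>} = {t}"
    by force
  then show ?case
    using \<open>t \<in> Z\<close> \<open>t < \<Theta>\<close> by (intro bexI[of _ t]) (simp_all add: signed_count_def)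
next
  case (step1 i)
  then obtain t where "t \<in> Z" "signed_count Z \<Theta> t = i"
    by blast
  moreover obtain t' where "t' \<in> Z" "t < t'" "\<And>u. u \<in> Z \<Longrightarrow> t < u \<Longrightarrow> t' \<le> u"
    using next_point[OF \<open>t \<in> Z\<close>] by blast
  ultimately show ?case
    using signed_count_next by metis
next
  case (step2 i)
  then obtain t where "t \<in> Z" "signed_count Z \<Theta> t = i"
    by blast
  moreover obtain t' where "t' \<in> Z" "t' < t" "\<And>u. u \<in> Z \<Longrightarrow> u < t \<Longrightarrow> u \<le> t'"
    using previous_point[of t] by blast
  moreover have "\<And>u. u \<in> Z \<Longrightarrow> t' < u \<Longrightarrow> t \<le> u"
    using calculation by force
  ultimately show ?case
    using signed_count_next[of t' t \<Theta>] by force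
qed

lemma signed_count_inj:
  "s \<in> Z \<Longrightarrow> t \<in> Z \<Longrightarrow> signed_count Z \<Theta> s = signed_count Z \<Theta> t \<Longrightarrow> s = t"
  using signed_count_strict_mono[of s t \<Theta>] signed_count_strict_mono[of t s \<Theta>]
  by (cases s t rule: linorder_cases) auto

lemma labelled_point_The: "labelled_point Z \<Theta> j (THE t. labelled_point Z \<Theta> j t)"
proof (rule theI')
  show "\<exists>!t. labelled_point Z \<Theta> j t"
    using signed_count_surj[of \<Theta> j] signed_count_inj[of _ _ \<Theta>]
    unfolding labelled_point_iff by blast
qed

lemma labelled_point_spacing:
  fixes \<Theta> :: real and j :: int
  defines "\<theta> \<equiv> \<lambda>j. THE t. labelled_point Z \<Theta> j t"
  shows "d < \<theta> (j + 1) - \<theta> j \<and> \<theta> (j + 1) - \<theta> j < D"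
proof -
  have "\<theta> j \<in> Z" and count: "signed_count Z \<Theta> (\<theta> j) = j"
    using labelled_point_The[of \<Theta> j] unfolding \<theta>_def labelled_point_iff by auto
  obtain t' where t': "t' \<in> Z" "\<theta> j < t'" "t' < \<theta> j + D" "\<And>u. u \<in> Z \<Longrightarrow> \<theta> j < u \<Longrightarrow> t' \<le> u"
    using next_point[OF \<open>\<theta> j \<in> Z\<close>] by blast
  then have "signed_count Z \<Theta> t' = j + 1"
    using signed_count_next[OF \<open>\<theta> j \<in> Z\<close>, of t' \<Theta>] count by simp
  moreover have "\<theta> (j + 1) \<in> Z" "signed_count Z \<Theta> (\<theta> (j + 1)) = j + 1"
    using labelled_point_The[of \<Theta> "j + 1"] unfolding \<theta>_def labelled_point_iff by auto
  ultimately have "\<theta> (j + 1) = t'"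
    using signed_count_inj[of "\<theta> (j + 1)" t' \<Theta>] \<open>t' \<in> Z\<close> by simp
  then show ?thesis
    using t' separated[OF \<open>\<theta> j \<in> Z\<close> \<open>t' \<in> Z\<close>] by simp
qed

end


section \<open>The sine kernel\<close>

lemma cis_neq:
  assumes "0 < y - x" and "y - x < 2 * pi"
  shows "cis y \<noteq> cis x"
proof
  assume "cis y = cis x"
  then have "cis (y - x) = 1"
    by (simp flip: cis_divide)
  then have "cos (y - x) = 1"
    by (metis cis.sel(1) one_complex.sel(1))
  then obtain k :: int where "y - x = of_int k * 2 * pi"
    by (auto simp: cos_one_2pi_int)
  then have "real_of_int k = (y - x) / (2 * pi)"
    by simp
  then have "0 < real_of_int k" and "real_of_int k < 1"
    using assms by simp_all
  then show False
    by simp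
qed

lemma cis_diff_cis: "cis (t + s) - cis t = 2 * \<i> * of_real (sin (s / 2)) * cis (t + s / 2)"
proof -
  have "cis (t + s) - cis t = cis (t + s / 2) * (cis (s / 2) - cis (- (s / 2)))"
    by (simp add: right_diff_distrib cis_mult ac_simps)
  also have "cis (s / 2) - cis (- (s / 2)) = 2 * \<i> * of_real (sin (s / 2))"
    by (simp add: complex_eq_iff)
  finally show ?thesis
    by (simp add: mult_ac)
qed

lemma sin_ge_third:
  fixes x :: real
  assumes "0 \<le> x" and "x \<le> 2"
  shows "x / 3 \<le> sin x"
proof -
  have "\<bar>sin x - (\<Sum>m<3. sin_coeff m * x ^ m)\<bar> \<le> inverse (fact 3) * \<bar>x\<bar> ^ 3"
    by (rule Maclaurin_sin_bound)
  moreover have "(\<Sum>m<3. sin_coeff m * x ^ m) = x"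
    by (simp add: numeral_3_eq_3 sin_coeff_def)
  ultimately have "x - x ^ 3 / 6 \<le> sin x"
    using assms by (simp add: fact_numeral abs_if split: if_splits)
  moreover have "x ^ 3 \<le> 4 * x"
    using assms mult_left_mono[of "x\<^sup>2" 4 x] power_mono[of x 2 2]
    by (simp add: power3_eq_cube power2_eq_square mult.commute)
  ultimately show ?thesis
    by simp
qed

lemma sine_kernel_of_real: "sine_kernel (of_real a) = cis (pi * a) * of_real (sinc (pi * a))"
  by (simp add: sine_kernel_def cis_conv_exp mult.assoc flip: sin_of_real)

lemma sinc_lower_bound:
  assumes "0 < \<epsilon>" and "0 < a" and "a \<le> 1 - \<epsilon>"
  shows "\<epsilon> / 3 \<le> sinc (pi * a)"
proof (cases "pi * a \<le> 2")
  case True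
  then have "pi * a / 3 \<le> sin (pi * a)"
    using assms by (intro sin_ge_third) auto
  then have "1 / 3 \<le> sin (pi * a) / (pi * a)"
    using assms by (simp add: field_simps)
  moreover have "sinc (pi * a) = sin (pi * a) / (pi * a)"
    using assms by simp
  ultimately show ?thesis
    using assms by linarith
next
  case False
  have "pi * \<epsilon> \<le> pi - pi * a"
    using assms mult_left_mono[of "\<epsilon> + a" 1 pi] by (simp add: algebra_simps)
  moreover have "pi - pi * a \<le> 2"
    using False pi_less_4 by linarith
  moreover have "0 \<le> pi * \<epsilon>"
    using assms by simp
  ultimately have "(pi - pi * a) / 3 \<le> sin (pi - pi * a)"
    by (intro sin_ge_third) linarith+
  then have sin_ge: "pi * \<epsilon> / 3 \<le> sin (pi * a)"
    using \<open>pi * \<epsilon> \<le> pi - pi * a\<close> by simp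
  have "\<epsilon> / 3 = (pi * \<epsilon> / 3) / pi"
    by simp
  also have "\<dots> \<le> sin (pi * a) / pi"
    using sin_ge by (intro divide_right_mono) auto
  also have "\<dots> \<le> sin (pi * a) / (pi * a)"
    using sin_ge assms by (intro divide_left_mono) (auto intro: order.trans[OF _ sin_ge])
  also have "\<dots> = sinc (pi * a)"
    using assms by simp
  finally show ?thesis .
qed

lemma sinc_neg: "1 < a \<Longrightarrow> a < 2 \<Longrightarrow> sinc (pi * a) < 0"
  using sin_lt_zero[of "pi * a"] by (simp add: divide_neg_pos)

definition kernel_ratio :: "(nat \<Rightarrow> complex poly) \<Rightarrow> nat \<Rightarrow> real \<Rightarrow> real \<Rightarrow> complex" where
  "kernel_ratio \<phi> n t a =
     CD_kernel \<phi> n (cis (t + 2 * pi * a / n)) (cis t) / CD_kernel \<phi> n (cis t) (cis t)"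

(* e^(-i\<pi>a(n-1)/n) is the phase picked up by the rotated paraorthogonal polynomial at t + 2\<pi>a/n
   (paraorth_at_shift); it tends to e^(-i\<pi>a) and so cancels the phase of the sine kernel. *)
definition kernel_phase :: "nat \<Rightarrow> real \<Rightarrow> complex" where
  "kernel_phase n a = cis (pi * a / n - pi * a)"

lemma kernel_ratio_periodic: "kernel_ratio \<phi> n (2 * pi * frac (t / (2 * pi))) a = kernel_ratio \<phi> n t a"
proof -
  have cis_periodic: "cis (x - 2 * pi * of_int k) = cis x" for x k
    by (simp flip: cis_divide)
  define k where "k = \<lfloor>t / (2 * pi)\<rfloor>"
  have "2 * pi * frac (t / (2 * pi)) = t - 2 * pi * of_int k"
    by (simp add: frac_def k_def field_simps)
  moreover have "t - 2 * pi * of_int k + 2 * pi * a / n = (t + 2 * pi * a / n) - 2 * pi * of_int k"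
    by simp
  ultimately show ?thesis
    unfolding kernel_ratio_def by (simp only: cis_periodic)
qed

lemma uniform_limit_kernel_ratio:
  fixes \<phi> :: "nat \<Rightarrow> complex poly"
  assumes "\<And>C. compact C \<Longrightarrow> C \<subseteq> {w. \<bar>Im w\<bar> < 1/2} \<Longrightarrow>
           uniform_limit ({0..<2*pi} \<times> C \<times> C)
             (\<lambda>n (\<theta>, a, b).
                CD_kernel \<phi> n (exp (\<i> * (of_real \<theta> + 2 * of_real pi * a / of_nat n)))
                               (exp (\<i> * (of_real \<theta> + 2 * of_real pi * b / of_nat n)))
                / CD_kernel \<phi> n (exp (\<i> * of_real \<theta>)) (exp (\<i> * of_real \<theta>)))
             (\<lambda>(\<theta>, a, b). sine_kernel (a - cnj b))
             sequentially"
  shows "uniform_limit (UNIV \<times> {0..2}) (\<lambda>n (t, a). kernel_ratio \<phi> n t a)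
           (\<lambda>(t, a). sine_kernel (of_real a)) sequentially"
proof -
  define C where "C = complex_of_real ` {0..2}"
  have C: "compact C" "C \<subseteq> {w. \<bar>Im w\<bar> < 1/2}"
    unfolding C_def by (auto intro: compact_continuous_image continuous_intros)
  have "(\<lambda>(t, a). (t, complex_of_real a, 0)) \<in> {0..<2 * pi} \<times> {0..2} \<rightarrow> {0..<2 * pi} \<times> C \<times> C"
    by (auto simp: C_def)
  from uniform_limit_compose'[OF assms[OF C] this]
  have lim: "uniform_limit ({0..<2 * pi} \<times> {0..2}) (\<lambda>n (t, a). kernel_ratio \<phi> n t a)
      (\<lambda>(t, a). sine_kernel (of_real a)) sequentially"
    by (rule uniform_limit_cong'[THEN iffD1, rotated 2]) (auto simp: kernel_ratio_def cis_conv_exp)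
  have "(\<lambda>(t, a). (2 * pi * frac (t / (2 * pi)), a)) \<in> UNIV \<times> {0..2} \<rightarrow> {0..<2 * pi} \<times> {0..2}"
    using frac_lt_1 by auto
  from uniform_limit_compose'[OF lim this] show ?thesis
    by (rule uniform_limit_cong'[THEN iffD1, rotated 2]) (auto simp: kernel_ratio_periodic)
qed

lemma uniform_limit_pointwise_const:
  assumes "(g \<longlongrightarrow> l) F"
  shows "uniform_limit S (\<lambda>n x. g n) (\<lambda>x. l) F"
  using assms by (intro uniform_limitI) (auto dest: tendstoD elim: eventually_mono)

lemma uniform_limit_rotated_kernel_ratio:
  assumes U: "uniform_limit (UNIV \<times> {0..2}) (\<lambda>n (t, a). kernel_ratio \<phi> n t a)
                (\<lambda>(t, a). sine_kernel (of_real a)) sequentially"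
    and "0 \<le> a" "a \<le> 2"
  shows "uniform_limit UNIV (\<lambda>n t. kernel_phase n a * kernel_ratio \<phi> n t a)
           (\<lambda>t. of_real (sinc (pi * a))) sequentially"
proof -
  have ratio: "uniform_limit UNIV (\<lambda>n t. kernel_ratio \<phi> n t a) (\<lambda>t. sine_kernel (of_real a)) sequentially"
  proof (rule uniform_limitI)
    fix e :: real assume "0 < e"
    show "eventually (\<lambda>n. \<forall>t\<in>UNIV. dist (kernel_ratio \<phi> n t a) (sine_kernel (of_real a)) < e) sequentially"
      using uniform_limitD[OF U \<open>0 < e\<close>] assms(2,3) by (elim eventually_mono) auto
  qed
  have "(\<lambda>n. kernel_phase n a) \<longlonglongrightarrow> cis (0 - pi * a)"
    unfolding kernel_phase_def by (intro tendsto_intros)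
  then have "uniform_limit UNIV (\<lambda>n t. kernel_phase n a * kernel_ratio \<phi> n t a)
      (\<lambda>t. cis (- (pi * a)) * sine_kernel (of_real a)) sequentially"
    by (intro uniform_lim_mult uniform_limit_pointwise_const ratio) (auto simp: image_constant_conv)
  moreover have "cis (- (pi * a)) * sine_kernel (of_real a) = of_real (sinc (pi * a))"
    by (simp only: sine_kernel_of_real mult.assoc[symmetric] cis_mult) simp
  ultimately show ?thesis
    by (simp only:)
qed

lemma eventually_Re_mult_cnj_neg:
  fixes f g :: "'a \<Rightarrow> 'b \<Rightarrow> complex"
  assumes f: "uniform_limit S f (\<lambda>x. of_real L\<^sub>1) F" and g: "uniform_limit S g (\<lambda>x. of_real L\<^sub>2) F"
    and "L\<^sub>1 * L\<^sub>2 < 0"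
  shows "eventually (\<lambda>n. \<forall>x\<in>S. Re (f n x * cnj (g n x)) < 0) F"
proof -
  have lim: "uniform_limit S (\<lambda>n x. f n x * cnj (g n x)) (\<lambda>x. of_real L\<^sub>1 * cnj (of_real L\<^sub>2)) F"
    by (intro uniform_lim_mult f uniform_limit_intros g) (auto simp: image_constant_conv)
  have "eventually (\<lambda>n. \<forall>x\<in>S. dist (f n x * cnj (g n x)) (of_real (L\<^sub>1 * L\<^sub>2)) < - (L\<^sub>1 * L\<^sub>2)) F"
    using uniform_limitD[OF lim, of "- (L\<^sub>1 * L\<^sub>2)"] \<open>L\<^sub>1 * L\<^sub>2 < 0\<close> by simp
  then show ?thesis
  proof (rule eventually_mono, intro ballI)
    fix n x
    assume "\<forall>x\<in>S. dist (f n x * cnj (g n x)) (of_real (L\<^sub>1 * L\<^sub>2)) < - (L\<^sub>1 * L\<^sub>2)" and "x \<in> S"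
    then have "norm (f n x * cnj (g n x) - of_real (L\<^sub>1 * L\<^sub>2)) < - (L\<^sub>1 * L\<^sub>2)"
      by (simp add: dist_norm)
    then show "Re (f n x * cnj (g n x)) < 0"
      using abs_Re_le_cmod[of "f n x * cnj (g n x) - of_real (L\<^sub>1 * L\<^sub>2)"] by simp
  qed
qed

lemma eventually_kernel_ratio_close:
  assumes U: "uniform_limit (UNIV \<times> {0..2}) (\<lambda>n (t, a). kernel_ratio \<phi> n t a)
                (\<lambda>(t, a). sine_kernel (of_real a)) sequentially"
    and "0 < e"
  shows "eventually (\<lambda>n. \<forall>t a. 0 \<le> a \<longrightarrow> a \<le> 2 \<longrightarrow>
           norm (kernel_ratio \<phi> n t a - sine_kernel (of_real a)) < e) sequentially"
  using uniform_limitD[OF U \<open>0 < e\<close>] by (rule eventually_mono) (auto simp: dist_norm)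

lemma eventually_rotated_kernel_ratio_sign:
  assumes U: "uniform_limit (UNIV \<times> {0..2}) (\<lambda>n (t, a). kernel_ratio \<phi> n t a)
                (\<lambda>(t, a). sine_kernel (of_real a)) sequentially"
    and "0 < \<epsilon>" "\<epsilon> < 1"
  shows "eventually (\<lambda>n. \<forall>t. Re (kernel_phase n (1/2) * kernel_ratio \<phi> n t (1/2)
           * cnj (kernel_phase n (1 + \<epsilon>/2) * kernel_ratio \<phi> n t (1 + \<epsilon>/2))) < 0) sequentially"
proof -
  have lim\<^sub>1: "uniform_limit UNIV (\<lambda>n t. kernel_phase n (1/2) * kernel_ratio \<phi> n t (1/2))
      (\<lambda>t. of_real (sinc (pi * (1/2)))) sequentially"
    by (rule uniform_limit_rotated_kernel_ratio[OF U]) simp_all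
  have lim\<^sub>2: "uniform_limit UNIV (\<lambda>n t. kernel_phase n (1 + \<epsilon>/2) * kernel_ratio \<phi> n t (1 + \<epsilon>/2))
      (\<lambda>t. of_real (sinc (pi * (1 + \<epsilon>/2)))) sequentially"
    using assms(2,3) by (intro uniform_limit_rotated_kernel_ratio[OF U]) simp_all
  have "sinc (pi * (1/2)) * sinc (pi * (1 + \<epsilon>/2)) < 0"
    using sinc_neg[of "1 + \<epsilon>/2"] assms(2,3) by (intro mult_pos_neg) auto
  from eventually_Re_mult_cnj_neg[OF lim\<^sub>1 lim\<^sub>2 this] show ?thesis
    by simp
qed

section \<open>Spacing of consecutive zeros\<close>

lemma IVT_sign_change:
  fixes f :: "real \<Rightarrow> real"
  assumes "a \<le> b" and "continuous_on {a..b} f" and "f a * f b < 0"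
  obtains x where "a \<le> x" "x \<le> b" "f x = 0"
proof (cases "f a < 0")
  case True
  then have "f b > 0"
    using assms(3) by (simp add: mult_less_0_iff)
  then show ?thesis
    using IVT'[of f a 0 b] True assms(1,2) that by force
next
  case False
  then have "f a > 0" "f b < 0"
    using assms(3) by (auto simp: mult_less_0_iff)
  then show ?thesis
    using IVT2'[of f b 0 a] assms(1,2) that by force
qed

lemma zero_angles_iff: "t \<in> zero_angles \<phi> \<beta> n \<longleftrightarrow> poly (paraorth \<phi> n (\<beta> (n - 1))) (cis t) = 0"
  by (simp add: zero_angles_def cis_conv_exp)

(* Real-valued by the reflection symmetry of paraorth (Im_rotated_paraorth), so its sign changes
   locate zeros of the paraorthogonal polynomial on the circle. *)
definition rotated_paraorth :: "(nat \<Rightarrow> complex poly) \<Rightarrow> nat \<Rightarrow> complex \<Rightarrow> real \<Rightarrow> complex" where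
  "rotated_paraorth \<phi> n b x =
     cnj (csqrt (- cnj b)) * cis (- (real n * x / 2)) * poly (paraorth \<phi> n b) (cis x)"

lemma rotated_paraorth_eq_0_iff:
  "norm b = 1 \<Longrightarrow> rotated_paraorth \<phi> n b x = 0 \<longleftrightarrow> poly (paraorth \<phi> n b) (cis x) = 0"
  by (auto simp: rotated_paraorth_def)

lemma continuous_on_rotated_paraorth: "continuous_on A (rotated_paraorth \<phi> n b)"
  unfolding rotated_paraorth_def by (intro continuous_intros continuous_on_poly) auto

context OPUC
begin

lemma paraorth_zero_gap_lower:
  assumes n: "n \<ge> 2" and "0 < \<epsilon>"
    and close: "\<And>a. 0 < a \<Longrightarrow> a \<le> 1 - \<epsilon> \<Longrightarrow>
                  norm (kernel_ratio \<phi> n t a - sine_kernel (of_real a)) < \<epsilon> / 3"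
    and zero_t: "poly (paraorth \<phi> n b) (cis t) = 0"
    and zero_s: "poly (paraorth \<phi> n b) (cis s) = 0"
    and "t < s"
  shows "t + 2 * pi * (1 - \<epsilon>) / n < s"
proof (rule ccontr)
  assume far: "\<not> ?thesis"
  define a where "a = n * (s - t) / (2 * pi)"
  have a: "0 < a" "a \<le> 1 - \<epsilon>" and s: "s = t + 2 * pi * a / n"
    using n \<open>t < s\<close> far by (auto simp: a_def field_simps)
  have "2 * pi * a / n < 2 * pi"
    using n a \<open>0 < \<epsilon>\<close> by (simp add: field_simps)
  then have "cis s \<noteq> cis t"
    using \<open>t < s\<close> by (intro cis_neq) (auto simp: s)
  obtain c where "c \<noteq> 0" and "\<And>z. poly (paraorth \<phi> n b) z = c * (z - cis t) * CD_kernel \<phi> n z (cis t)"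
    using paraorth_eq_CD_kernel[OF n _ zero_t] by auto
  then have "CD_kernel \<phi> n (cis s) (cis t) = 0"
    using zero_s \<open>cis s \<noteq> cis t\<close> by simp
  then have "norm (sine_kernel (of_real a)) < \<epsilon> / 3"
    using close[OF a] by (simp add: kernel_ratio_def s)
  moreover have "\<epsilon> / 3 \<le> norm (sine_kernel (of_real a))"
    using sinc_lower_bound[OF \<open>0 < \<epsilon>\<close> a] by (simp add: sine_kernel_of_real norm_mult)
  ultimately show False
    by simp
qed

lemma Im_rotated_paraorth:
  assumes "n \<ge> 1" and b: "norm b = 1"
  shows "Im (rotated_paraorth \<phi> n b x) = 0"
proof -
  define \<gamma> where "\<gamma> = csqrt (- cnj b)"
  have \<gamma>: "\<gamma>\<^sup>2 = - cnj b" "norm \<gamma> = 1"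
    using b by (simp_all add: \<gamma>_def)
  define h where "h = poly (paraorth \<phi> n b) (cis x)"
  have "cis x ^ n * cnj h = - b * h"
    using paraorth_reflection[OF assms(1) b, of "cis x"] one_div_cnj_unit[of "cis x"]
    by (simp add: h_def)
  then have reflect: "cis (n * x) * cnj h = - b * h"
    by (simp only: Complex.DeMoivre)
  have conj_\<gamma>: "cnj \<gamma> = - \<gamma> * b"
  proof -
    have "- \<gamma> * b * \<gamma> = - \<gamma>\<^sup>2 * b"
      by (simp add: power2_eq_square)
    also have "\<dots> = 1"
      using \<gamma>(1) cnj_mult_self_unit[OF b] by simp
    finally have "- \<gamma> * b = 1 / \<gamma>"
      using \<gamma>(2) by (auto simp: eq_divide_eq)
    then show ?thesis
      using cnj_unit[OF \<gamma>(2)] by simp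
  qed
  have half: "cis (n * x / 2) = cis (- (n * x / 2)) * cis (n * x)"
    by (simp add: cis_mult mult.commute)
  have "cnj (cnj \<gamma> * cis (- (n * x / 2)) * h) = \<gamma> * cis (- (n * x / 2)) * (cis (n * x) * cnj h)"
    by (simp only: complex_cnj_mult cis_cnj complex_cnj_cnj minus_minus half, simp only: mult_ac)
  also have "\<dots> = cnj \<gamma> * cis (- (n * x / 2)) * h"
    by (simp only: reflect conj_\<gamma>, simp only: mult_minus_left mult_minus_right mult_ac)
  finally show ?thesis
    unfolding rotated_paraorth_def \<gamma>_def[symmetric] h_def[symmetric]
    by (metis Reals_cnj_iff complex_is_Real_iff)
qed

lemma paraorth_at_shift:
  fixes a :: real
  assumes rep: "\<And>z. poly (paraorth \<phi> n b) z = c * (z - cis t) * CD_kernel \<phi> n z (cis t)"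
    and "n \<ge> 1"
  defines "s \<equiv> 2 * pi * a / n"
  shows "cis (- (n * (t + s) / 2)) * poly (paraorth \<phi> n b) (cis (t + s))
       = c * cis (t - n * t / 2) * (2 * \<i> * of_real (sin (pi * a / n)))
           * CD_kernel \<phi> n (cis t) (cis t) * (kernel_phase n a * kernel_ratio \<phi> n t a)"
proof -
  have ratio: "CD_kernel \<phi> n (cis (t + s)) (cis t) = CD_kernel \<phi> n (cis t) (cis t) * kernel_ratio \<phi> n t a"
    using CD_kernel_diag_nonzero[OF \<open>n \<ge> 1\<close>] by (simp add: kernel_ratio_def s_def)
  have arg: "- (n * (t + s) / 2) + (t + s / 2) = (t - n * t / 2) + (pi * a / n - pi * a)"
    using \<open>n \<ge> 1\<close> by (simp add: s_def field_simps)
  have phase: "cis (- (n * (t + s) / 2)) * cis (t + s / 2) = cis (t - n * t / 2) * kernel_phase n a"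
    unfolding kernel_phase_def cis_mult arg ..
  have "s / 2 = pi * a / n"
    by (simp add: s_def)
  have "cis (- (n * (t + s) / 2)) * poly (paraorth \<phi> n b) (cis (t + s))
      = c * (2 * \<i> * of_real (sin (s / 2))) * (cis (- (n * (t + s) / 2)) * cis (t + s / 2))
          * CD_kernel \<phi> n (cis (t + s)) (cis t)"
    by (simp only: rep cis_diff_cis mult_ac)
  also have "\<dots> = c * (2 * \<i> * of_real (sin (pi * a / n))) * (cis (t - n * t / 2) * kernel_phase n a)
          * (CD_kernel \<phi> n (cis t) (cis t) * kernel_ratio \<phi> n t a)"
    by (simp only: phase ratio, simp only: \<open>s / 2 = pi * a / n\<close>)
  finally show ?thesis
    by (simp only: mult_ac)
qed

lemma rotated_paraorth_at_shift:
  assumes n: "n \<ge> 2" and b: "norm b = 1" and zero: "poly (paraorth \<phi> n b) (cis t) = 0"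
  obtains \<Omega> where "\<Omega> \<noteq> 0" and "\<And>a. rotated_paraorth \<phi> n b (t + 2 * pi * a / n)
      = \<Omega> * of_real (sin (pi * a / n)) * (kernel_phase n a * kernel_ratio \<phi> n t a)"
proof -
  obtain c where "c \<noteq> 0"
    and rep: "\<And>z. poly (paraorth \<phi> n b) z = c * (z - cis t) * CD_kernel \<phi> n z (cis t)"
    using paraorth_eq_CD_kernel[OF n _ zero] by auto
  define \<Omega> where "\<Omega> = cnj (csqrt (- cnj b)) * c * cis (t - n * t / 2) * (2 * \<i>) * CD_kernel \<phi> n (cis t) (cis t)"
  show ?thesis
  proof
    show "\<Omega> \<noteq> 0"
      using \<open>c \<noteq> 0\<close> b CD_kernel_diag_nonzero[of n "cis t"] n by (auto simp: \<Omega>_def)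
    show "rotated_paraorth \<phi> n b (t + 2 * pi * a / n)
        = \<Omega> * of_real (sin (pi * a / n)) * (kernel_phase n a * kernel_ratio \<phi> n t a)" for a
      using paraorth_at_shift[OF rep, of a] n by (simp add: rotated_paraorth_def \<Omega>_def mult_ac)
  qed
qed

lemma paraorth_zero_gap_upper:
  assumes n: "n \<ge> 2" and b: "norm b = 1" and a: "0 < a\<^sub>1" "a\<^sub>1 \<le> a\<^sub>2" "a\<^sub>2 < 2"
    and zero: "poly (paraorth \<phi> n b) (cis t) = 0"
    and sign: "Re (kernel_phase n a\<^sub>1 * kernel_ratio \<phi> n t a\<^sub>1
                 * cnj (kernel_phase n a\<^sub>2 * kernel_ratio \<phi> n t a\<^sub>2)) < 0"
  obtains x where "poly (paraorth \<phi> n b) (cis x) = 0"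
    and "t + 2 * pi * a\<^sub>1 / n \<le> x" and "x \<le> t + 2 * pi * a\<^sub>2 / n"
proof -
  obtain \<Omega> where "\<Omega> \<noteq> 0" and rotated_at: "\<And>a. rotated_paraorth \<phi> n b (t + 2 * pi * a / n)
      = \<Omega> * of_real (sin (pi * a / n)) * (kernel_phase n a * kernel_ratio \<phi> n t a)"
    using rotated_paraorth_at_shift[OF n b zero] by blast
  define V where "V = rotated_paraorth \<phi> n b"
  define G where "G a = kernel_phase n a * kernel_ratio \<phi> n t a" for a
  have V_at: "V (t + 2 * pi * a / n) = \<Omega> * of_real (sin (pi * a / n)) * G a" for a
    using rotated_at by (simp add: V_def G_def)
  have sin_pos: "0 < sin (pi * a / n)" if "0 < a" "a < 2" for a
    using that n by (intro sin_gt_zero) (auto simp: field_simps)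
  define x\<^sub>1 where "x\<^sub>1 = t + 2 * pi * a\<^sub>1 / n"
  define x\<^sub>2 where "x\<^sub>2 = t + 2 * pi * a\<^sub>2 / n"
  have "V x\<^sub>1 * cnj (V x\<^sub>2)
      = of_real ((cmod \<Omega>)\<^sup>2 * (sin (pi * a\<^sub>1 / n) * sin (pi * a\<^sub>2 / n))) * (G a\<^sub>1 * cnj (G a\<^sub>2))"
    unfolding x\<^sub>1_def x\<^sub>2_def V_at by (simp add: mult_ac flip: complex_norm_square)
  moreover have "Re (V x\<^sub>1) * Re (V x\<^sub>2) = Re (V x\<^sub>1 * cnj (V x\<^sub>2))"
    using Im_rotated_paraorth n b by (simp add: V_def)
  ultimately have "Re (V x\<^sub>1) * Re (V x\<^sub>2)
      = ((cmod \<Omega>)\<^sup>2 * (sin (pi * a\<^sub>1 / n) * sin (pi * a\<^sub>2 / n))) * Re (G a\<^sub>1 * cnj (G a\<^sub>2))"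
    by simp
  also have "\<dots> < 0"
    using \<open>\<Omega> \<noteq> 0\<close> sin_pos[of a\<^sub>1] sin_pos[of a\<^sub>2] a sign by (intro mult_pos_neg) (simp_all add: G_def)
  finally have "Re (V x\<^sub>1) * Re (V x\<^sub>2) < 0" .
  moreover have "x\<^sub>1 \<le> x\<^sub>2"
    using a n by (simp add: x\<^sub>1_def x\<^sub>2_def divide_right_mono)
  moreover have "continuous_on {x\<^sub>1..x\<^sub>2} (\<lambda>x. Re (V x))"
    unfolding V_def by (intro continuous_intros continuous_on_rotated_paraorth)
  ultimately obtain x where "x\<^sub>1 \<le> x" "x \<le> x\<^sub>2" "Re (V x) = 0"
    using IVT_sign_change by blast
  then have "V x = 0"
    using Im_rotated_paraorth[of n b x] n b by (simp add: V_def complex_eq_iff)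
  then show ?thesis
    using that \<open>x\<^sub>1 \<le> x\<close> \<open>x \<le> x\<^sub>2\<close> b by (simp add: V_def x\<^sub>1_def x\<^sub>2_def rotated_paraorth_eq_0_iff)
qed

lemma zero_angles_unbounded_below:
  assumes "n \<ge> 2" and "norm (\<beta> (n - 1)) = 1"
  shows "\<exists>t\<in>zero_angles \<phi> \<beta> n. t < x"
proof -
  obtain t\<^sub>0 where "t\<^sub>0 \<in> zero_angles \<phi> \<beta> n"
    using paraorth_zero_angle_exists[OF assms] unfolding zero_angles_iff by blast
  define k where "k = \<lceil>(t\<^sub>0 - x) / (2 * pi)\<rceil> + 1"
  have "(t\<^sub>0 - x) / (2 * pi) < of_int k"
    unfolding k_def by linarith
  then have "t\<^sub>0 - 2 * pi * of_int k < x"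
    by (simp add: field_simps)
  moreover have "cis (t\<^sub>0 - 2 * pi * of_int k) = cis t\<^sub>0"
    by (simp flip: cis_divide)
  ultimately show ?thesis
    using \<open>t\<^sub>0 \<in> zero_angles \<phi> \<beta> n\<close> by (auto simp: zero_angles_iff)
qed

lemma zero_angles_separated:
  assumes n: "n \<ge> 2" and b: "norm (\<beta> (n - 1)) = 1" and \<epsilon>: "0 < \<epsilon>" "\<epsilon> < 1"
    and close: "\<And>t a. 0 \<le> a \<Longrightarrow> a \<le> 2 \<Longrightarrow>
                  norm (kernel_ratio \<phi> n t a - sine_kernel (of_real a)) < \<epsilon> / 3"
    and sign: "\<And>t. Re (kernel_phase n (1/2) * kernel_ratio \<phi> n t (1/2)
                  * cnj (kernel_phase n (1 + \<epsilon>/2) * kernel_ratio \<phi> n t (1 + \<epsilon>/2))) < 0"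
  shows "separated_set (zero_angles \<phi> \<beta> n) (2 * pi * (1 - \<epsilon>) / n) (2 * pi * (1 + \<epsilon>) / n)"
proof
  show "0 < 2 * pi * (1 - \<epsilon>) / n"
    using n \<epsilon> by simp
  show "s + 2 * pi * (1 - \<epsilon>) / n < t"
    if "s \<in> zero_angles \<phi> \<beta> n" "t \<in> zero_angles \<phi> \<beta> n" "s < t" for s t
  proof -
    have "norm (kernel_ratio \<phi> n s a - sine_kernel (of_real a)) < \<epsilon> / 3" if "0 < a" "a \<le> 1 - \<epsilon>" for a
      using close[of a s] that \<epsilon> by simp
    then show ?thesis
      using that(1,2) unfolding zero_angles_iff
      by (rule paraorth_zero_gap_lower[OF n \<open>0 < \<epsilon>\<close> _ _ _ \<open>s < t\<close>])
  qed
  show "\<exists>s\<in>zero_angles \<phi> \<beta> n. t < s \<and> s < t + 2 * pi * (1 + \<epsilon>) / n"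
    if "t \<in> zero_angles \<phi> \<beta> n" for t
  proof -
    have "0 < (1::real) / 2" "1 / 2 \<le> 1 + \<epsilon> / 2" "1 + \<epsilon> / 2 < 2"
      using \<epsilon> by auto
    moreover have "poly (paraorth \<phi> n (\<beta> (n - 1))) (cis t) = 0"
      using that by (simp add: zero_angles_iff)
    ultimately obtain x where "x \<in> zero_angles \<phi> \<beta> n"
      and "t + 2 * pi * (1/2) / n \<le> x" and "x \<le> t + 2 * pi * (1 + \<epsilon>/2) / n"
      using paraorth_zero_gap_upper[OF n b _ _ _ _ sign] unfolding zero_angles_iff by blast
    moreover have "0 < 2 * pi * (1/2) / n"
      using n by simp
    moreover have "2 * pi * (1 + \<epsilon>/2) / n < 2 * pi * (1 + \<epsilon>) / n"
      using n \<epsilon> by (simp add: divide_strict_right_mono)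
    ultimately show ?thesis
      by (intro bexI[of _ x]) simp_all
  qed
  show "\<exists>t\<in>zero_angles \<phi> \<beta> n. t < x" for x
    using zero_angles_unbounded_below[of n \<beta>, OF n b] .
qed

lemma eventually_zero_angle_spacing:
  fixes \<beta> :: "nat \<Rightarrow> complex"
  assumes U: "uniform_limit (UNIV \<times> {0..2}) (\<lambda>n (t, a). kernel_ratio \<phi> n t a)
                (\<lambda>(t, a). sine_kernel (of_real a)) sequentially"
    and \<beta>: "\<And>n. norm (\<beta> n) = 1" and \<epsilon>: "0 < \<epsilon>" "\<epsilon> < 1"
  shows "eventually (\<lambda>n. 2 * pi * (1 - \<epsilon>) < n * (zero_angle \<phi> \<beta> n \<Theta> (j + 1) - zero_angle \<phi> \<beta> n \<Theta> j)
                       \<and> n * (zero_angle \<phi> \<beta> n \<Theta> (j + 1) - zero_angle \<phi> \<beta> n \<Theta> j) < 2 * pi * (1 + \<epsilon>))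
           sequentially"
proof -
  have "0 < \<epsilon> / 3"
    using \<epsilon> by simp
  from eventually_kernel_ratio_close[OF U this] eventually_rotated_kernel_ratio_sign[OF U \<epsilon>]
    eventually_ge_at_top[of 2]
  show ?thesis
  proof eventually_elim
    case (elim n)
    then have "separated_set (zero_angles \<phi> \<beta> n) (2 * pi * (1 - \<epsilon>) / n) (2 * pi * (1 + \<epsilon>) / n)"
      using \<beta> \<epsilon> by (intro zero_angles_separated) simp_all
    from separated_set.labelled_point_spacing[OF this, of \<Theta> j]
    have "2 * pi * (1 - \<epsilon>) / n < zero_angle \<phi> \<beta> n \<Theta> (j + 1) - zero_angle \<phi> \<beta> n \<Theta> j
        \<and> zero_angle \<phi> \<beta> n \<Theta> (j + 1) - zero_angle \<phi> \<beta> n \<Theta> j < 2 * pi * (1 + \<epsilon>) / n"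
      by (simp only: zero_angle_eq_The_labelled_point)
    moreover have "0 < real n"
      using elim(3) by simp
    ultimately show ?case
      by (simp add: field_simps)
  qed
qed

end

lemma tendsto_relative_bounds:
  fixes f :: "'a \<Rightarrow> real"
  assumes "0 < c"
    and bounds: "\<And>\<epsilon>. 0 < \<epsilon> \<Longrightarrow> \<epsilon> < 1 \<Longrightarrow> eventually (\<lambda>x. c * (1 - \<epsilon>) < f x \<and> f x < c * (1 + \<epsilon>)) F"
  shows "(f \<longlongrightarrow> c) F"
proof (rule tendstoI)
  fix e :: real assume "0 < e"
  define \<epsilon> where "\<epsilon> = min (1 / 2) (e / (2 * c))"
  have "0 < \<epsilon>" "\<epsilon> < 1" and "c * \<epsilon> < e"
    using \<open>0 < c\<close> \<open>0 < e\<close> by (auto simp: \<epsilon>_def min_def field_simps)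
  with bounds have "eventually (\<lambda>x. c * (1 - \<epsilon>) < f x \<and> f x < c * (1 + \<epsilon>)) F"
    by blast
  then show "eventually (\<lambda>x. dist (f x) c < e) F"
    by (rule eventually_mono) (use \<open>c * \<epsilon> < e\<close> in \<open>auto simp: dist_real_def algebra_simps\<close>)
qed

theorem mainTheorem6:
  fixes \<mu> :: "complex measure" and \<phi> :: "nat \<Rightarrow> complex poly"
    and \<beta> :: "nat \<Rightarrow> complex" and \<Theta> :: real and j :: int
  assumes "prob_measure_on_circle \<mu>"
    and "infinite (measure_support \<mu>)"
    and "is_OPUC \<mu> \<phi>"
    and "\<And>C. compact C \<Longrightarrow> C \<subseteq> {w. \<bar>Im w\<bar> < 1/2} \<Longrightarrow>
           uniform_limit ({0..<2*pi} \<times> C \<times> C)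
             (\<lambda>n (\<theta>, a, b).
                CD_kernel \<phi> n (exp (\<i> * (of_real \<theta> + 2 * of_real pi * a / of_nat n)))
                               (exp (\<i> * (of_real \<theta> + 2 * of_real pi * b / of_nat n)))
                / CD_kernel \<phi> n (exp (\<i> * of_real \<theta>)) (exp (\<i> * of_real \<theta>)))
             (\<lambda>(\<theta>, a, b). sine_kernel (a - cnj b))
             sequentially"
    and "\<And>n. norm (\<beta> n) = 1"
  shows "(\<lambda>n. real n * (zero_angle \<phi> \<beta> n \<Theta> (j + 1) - zero_angle \<phi> \<beta> n \<Theta> j))
           \<longlonglongrightarrow> 2 * pi"
proof -
  interpret OPUC \<mu> \<phi>
    using assms(1,3) by unfold_locales
  show ?thesis
    using eventually_zero_angle_spacing[OF uniform_limit_kernel_ratio[OF assms(4)], where \<beta> = \<beta>]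
      assms(5) by (intro tendsto_relative_bounds) auto
qed

end
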